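(* Let $G$ be a $\mathrm{sat}(n,K_{2,3})$-graph with $\delta(G) = 2$. Let $A$ be the set of vertices of degree $2$ whose two neighbors are adjacent, and let $B$ be the set of vertices of degree $2$ whose two neighbors have exactly one common neighbor. If $A\cap B \neq \emptyset$, then $e(G) \geq 2n-3$.
   Context: All graphs are finite and simple. A graph $G$ is $K_{2,3}$-saturated if $G$ contains no subgraph isomorphic to $K_{2,3}$, but for every pair of nonadjacent vertices $u,v$, the graph $G+uv$ contains a subgraph isomorphic to $K_{2,3}$. $\mathrm{sat}(n,K_{2,3})$ is the minimum number of edges of a $K_{2,3}$-saturated graph on $n$ vertices, and a $\mathrm{sat}(n,K_{2,3})$-graph is a $K_{2,3}$-saturated graph on $n$ vertices with exactly $\mathrm{sat}(n,K_{2,3})$ edges. $e(G)$ is the number of edges and $\delta(G)$ the minimum degree of $G$. *)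

theory Defs
  imports Main
begin

definition graph :: "'a set \<Rightarrow> ('a \<Rightarrow> 'a \<Rightarrow> bool) \<Rightarrow> bool" where
  "graph V E \<longleftrightarrow> finite V \<and> (\<forall>u v. E u v \<longrightarrow> u \<in> V \<and> v \<in> V)
     \<and> (\<forall>u v. E u v \<longrightarrow> E v u) \<and> (\<forall>u. \<not> E u u)"

definition num_edges :: "'a set \<Rightarrow> ('a \<Rightarrow> 'a \<Rightarrow> bool) \<Rightarrow> nat" where
  "num_edges V E = card {{u, v} | u v. u \<in> V \<and> v \<in> V \<and> E u v}"

definition degree :: "'a set \<Rightarrow> ('a \<Rightarrow> 'a \<Rightarrow> bool) \<Rightarrow> 'a \<Rightarrow> nat" where
  "degree V E x = card {y \<in> V. E x y}"

definition min_degree :: "'a set \<Rightarrow> ('a \<Rightarrow> 'a \<Rightarrow> bool) \<Rightarrow> nat" where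
  "min_degree V E = Min (degree V E ` V)"

definition has_K23 :: "'a set \<Rightarrow> ('a \<Rightarrow> 'a \<Rightarrow> bool) \<Rightarrow> bool" where
  "has_K23 V E \<longleftrightarrow> (\<exists>a1 a2 b1 b2 b3.
     {a1, a2, b1, b2, b3} \<subseteq> V \<and> card {a1, a2, b1, b2, b3} = 5 \<and>
     E a1 b1 \<and> E a1 b2 \<and> E a1 b3 \<and> E a2 b1 \<and> E a2 b2 \<and> E a2 b3)"

definition add_edge :: "('a \<Rightarrow> 'a \<Rightarrow> bool) \<Rightarrow> 'a \<Rightarrow> 'a \<Rightarrow> ('a \<Rightarrow> 'a \<Rightarrow> bool)" where
  "add_edge E u v = (\<lambda>x y. E x y \<or> (x = u \<and> y = v) \<or> (x = v \<and> y = u))"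

definition K23_saturated :: "'a set \<Rightarrow> ('a \<Rightarrow> 'a \<Rightarrow> bool) \<Rightarrow> bool" where
  "K23_saturated V E \<longleftrightarrow> graph V E \<and> \<not> has_K23 V E \<and>
     (\<forall>u \<in> V. \<forall>v \<in> V. u \<noteq> v \<and> \<not> E u v \<longrightarrow> has_K23 V (add_edge E u v))"

text \<open>sat(n, K_{2,3}): minimum number of edges of a K_{2,3}-saturated graph on n vertices
  (vertex sets taken, w.l.o.g., to be sets of naturals).\<close>
definition sat_K23 :: "nat \<Rightarrow> nat" where
  "sat_K23 n = (LEAST m. \<exists>(V :: nat set) E. card V = n \<and> K23_saturated V E \<and> num_edges V E = m)"

definition sat_graph_K23 :: "nat \<Rightarrow> 'a set \<Rightarrow> ('a \<Rightarrow> 'a \<Rightarrow> bool) \<Rightarrow> bool" where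
  "sat_graph_K23 n V E \<longleftrightarrow> card V = n \<and> K23_saturated V E \<and> num_edges V E = sat_K23 n"

end

theory Submission
  imports Defs
begin

text \<open>
  Let x be a vertex of degree 2 in a K23-saturated graph G whose neighbours y, z are adjacent and
  have x as their only common neighbour; we show e(G) \<ge> 2n - 3. The vertices outside the triangle split into ny (neighbours of y), nz
  (neighbours of z; disjoint from ny) and the far vertices. For an outer vertex w let cy w, cz w
  count its common neighbours other than x with y, resp. z. K23-freeness gives cy, cz \<le> 2 and
  saturation at the non-edge xw gives max (cy w) (cz w) = 2, so cy w + cz w = exc w + 2 where
  exc = min cy cz. Since e(G) \<ge> 3 + |ny| + |nz| + e(outer), summing degrees inside the outer
  vertices reduces the claim to the discharging inequality
    |ny \<union> nz| \<le> (sum of exc over ny \<union> nz) + 2 (sum of exc over far).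
  Vertices of ny \<union> nz with exc = 0 (deficient) are either matched injectively to adjacent
  vertices with exc = 2 (rich), or receive charge 4 from far neighbours of positive excess
  (donors), while a far vertex r hands out at most 8 exc r.
\<close>

definition edges :: "'a set \<Rightarrow> ('a \<Rightarrow> 'a \<Rightarrow> bool) \<Rightarrow> 'a set set" where
  "edges S E = {{u, v} | u v. u \<in> S \<and> v \<in> S \<and> E u v}"

lemma num_edges_eq_card_edges: "num_edges V E = card (edges V E)"
  unfolding num_edges_def edges_def ..

lemma finite_edges: "finite S \<Longrightarrow> finite (edges S E)"
  by (rule finite_subset[of _ "Pow S"]) (auto simp: edges_def)

lemma handshake:
  assumes fin: "finite S" and sym: "\<And>u v. E u v \<Longrightarrow> E v u" and irr: "\<And>u. \<not> E u u"
  shows "2 * card (edges S E) = (\<Sum>u\<in>S. card {v\<in>S. E u v})"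
proof -
  define P where "P = Sigma S (\<lambda>u. {v\<in>S. E u v})"
  have fibres: "card {p\<in>P. {fst p, snd p} = e} = 2" if e_edge: "e \<in> edges S E" for e
  proof -
    obtain u v where e: "e = {u, v}" "u \<in> S" "v \<in> S" "E u v"
      using e_edge unfolding edges_def by blast
    then have "{p\<in>P. {fst p, snd p} = e} = {(u, v), (v, u)}"
      using sym unfolding P_def by (auto simp: doubleton_eq_iff)
    moreover have "u \<noteq> v" using e irr by auto
    ultimately show ?thesis by simp
  qed
  have "finite P" unfolding P_def using fin by simp
  have P_split: "P = (\<Union>e\<in>edges S E. {p\<in>P. {fst p, snd p} = e})"
    unfolding P_def edges_def by fastforce
  have "card P = (\<Sum>e\<in>edges S E. card {p\<in>P. {fst p, snd p} = e})"
    by (subst P_split, rule card_UN_disjoint) (use \<open>finite P\<close> finite_edges[OF fin] in auto)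
  then have "card P = 2 * card (edges S E)" using fibres by simp
  moreover have "card P = (\<Sum>u\<in>S. card {v\<in>S. E u v})" unfolding P_def using fin by simp
  ultimately show ?thesis by simp
qed

lemma K23_free_common_neighbours:
  assumes "\<not> has_K23 V E" "a \<in> V" "b \<in> V" "a \<noteq> b" "\<And>u. \<not> E u u"
  shows "card {c\<in>V. E a c \<and> E b c} \<le> 2"
proof (rule ccontr)
  assume "\<not> ?thesis"
  then obtain C where "C \<subseteq> {c\<in>V. E a c \<and> E b c}" "card C = 3"
    using obtain_subset_with_card_n[of 3 "{c\<in>V. E a c \<and> E b c}"] by auto
  then obtain c1 c2 c3 where C: "C = {c1, c2, c3}" "c1 \<noteq> c2" "c2 \<noteq> c3" "c1 \<noteq> c3"
    "{c1, c2, c3} \<subseteq> {c\<in>V. E a c \<and> E b c}"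
    by (auto simp: card_3_iff)
  then have "distinct [a, b, c1, c2, c3]" using assms(4,5) by auto
  then have "card {a, b, c1, c2, c3} = 5" using distinct_card[of "[a, b, c1, c2, c3]"] by simp
  then have "has_K23 V E" using C assms(2,3) unfolding has_K23_def by blast
  then show False using assms(1) by simp
qed

text \<open>Adding the edge uv creates a K23 in which u lies on the side of size 2: some a \<noteq> u is
  adjacent to v and shares two further neighbours b, c with u.\<close>
definition closes_K23 :: "('a \<Rightarrow> 'a \<Rightarrow> bool) \<Rightarrow> 'a \<Rightarrow> 'a \<Rightarrow> bool" where
  "closes_K23 E u v \<longleftrightarrow> (\<exists>a b c. distinct [u, v, a, b, c] \<and>
     E a v \<and> E u b \<and> E a b \<and> E u c \<and> E a c)"

lemma closes_K23_if_missing_edge: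
  assumes d: "distinct [a1, a2, b1, b2, b3]"
    and e: "add_edge E u v a1 b1" "add_edge E u v a1 b2" "add_edge E u v a1 b3"
           "add_edge E u v a2 b1" "add_edge E u v a2 b2" "add_edge E u v a2 b3"
    and miss: "\<not> E a1 b1"
  shows "closes_K23 E u v \<or> closes_K23 E v u"
proof -
  have uv: "a1 = u \<and> b1 = v \<or> a1 = v \<and> b1 = u" using e(1) miss by (auto simp: add_edge_def)
  have old: "E p q" if "add_edge E u v p q" "{p, q} \<noteq> {a1, b1}" for p q
    using that uv by (auto simp: add_edge_def)
  have "E a2 b1" "E a1 b2" "E a2 b2" "E a1 b3" "E a2 b3"
    using old e d by (auto simp: doubleton_eq_iff)
  then have "closes_K23 E a1 b1"
    unfolding closes_K23_def using d by (intro exI[of _ a2] exI[of _ b2] exI[of _ b3]) auto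
  then show ?thesis using uv by auto
qed

lemma saturation_closes_K23:
  assumes "has_K23 V (add_edge E u v)" "\<not> has_K23 V E"
  shows "closes_K23 E u v \<or> closes_K23 E v u"
proof -
  obtain a1 a2 b1 b2 b3 where sub: "{a1, a2, b1, b2, b3} \<subseteq> V"
    and c5: "card {a1, a2, b1, b2, b3} = 5"
    and e: "add_edge E u v a1 b1" "add_edge E u v a1 b2" "add_edge E u v a1 b3"
           "add_edge E u v a2 b1" "add_edge E u v a2 b2" "add_edge E u v a2 b3"
    using assms(1) unfolding has_K23_def by blast
  have d: "distinct [a1, a2, b1, b2, b3]"
    using c5 card_distinct[of "[a1, a2, b1, b2, b3]"] by simp
  have "\<not> E a1 b1 \<or> \<not> E a1 b2 \<or> \<not> E a1 b3 \<or> \<not> E a2 b1 \<or> \<not> E a2 b2 \<or> \<not> E a2 b3"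
    using assms(2) sub c5 unfolding has_K23_def by blast
  moreover have "distinct [a1, a2, b2, b1, b3]" "distinct [a1, a2, b3, b1, b2]"
    "distinct [a2, a1, b1, b2, b3]" "distinct [a2, a1, b2, b1, b3]" "distinct [a2, a1, b3, b1, b2]"
    using d by auto
  ultimately show ?thesis
    using closes_K23_if_missing_edge[of a1 a2 b1 b2 b3] closes_K23_if_missing_edge[of a1 a2 b2 b1 b3]
      closes_K23_if_missing_edge[of a1 a2 b3 b1 b2] closes_K23_if_missing_edge[of a2 a1 b1 b2 b3]
      closes_K23_if_missing_edge[of a2 a1 b2 b1 b3] closes_K23_if_missing_edge[of a2 a1 b3 b1 b2]
      d e by blast
qed

locale saturated_triangle =
  fixes V :: "'a set" and E :: "'a \<Rightarrow> 'a \<Rightarrow> bool" and x y z :: 'a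
  assumes fin: "finite V"
    and edge_in_V: "\<And>u v. E u v \<Longrightarrow> u \<in> V \<and> v \<in> V"
    and sym: "\<And>u v. E u v \<Longrightarrow> E v u"
    and irrefl: "\<And>u. \<not> E u u"
    and K23_free: "\<not> has_K23 V E"
    and saturated: "\<And>u v. u \<in> V \<Longrightarrow> v \<in> V \<Longrightarrow> u \<noteq> v \<Longrightarrow> \<not> E u v \<Longrightarrow>
                      has_K23 V (add_edge E u v)"
    and triangle: "E x y" "E x z" "E y z"
    and nbrs_x: "\<And>w. E x w \<Longrightarrow> w = y \<or> w = z"
    and common_yz: "\<And>w. E y w \<Longrightarrow> E z w \<Longrightarrow> w = x"

text \<open>The configuration is symmetric in y and z; facts about y transfer to z through this
  interpretation.\<close>
sublocale saturated_triangle \<subseteq> swap: saturated_triangle V E x z y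
  by unfold_locales (use fin edge_in_V sym irrefl K23_free saturated triangle nbrs_x common_yz in blast)+

context saturated_triangle
begin

definition outer :: "'a set" where "outer = V - {x, y, z}"
definition ny :: "'a set" where "ny = {w\<in>outer. E y w}"
definition nz :: "'a set" where "nz = {w\<in>outer. E z w}"
definition far :: "'a set" where "far = outer - ny - nz"

definition deg_in :: "'a set \<Rightarrow> 'a \<Rightarrow> nat" where "deg_in S w = card {b\<in>S. E w b}"

definition cy :: "'a \<Rightarrow> nat" where "cy w = card {b\<in>V. E w b \<and> E y b \<and> b \<noteq> x}"
definition cz :: "'a \<Rightarrow> nat" where "cz w = card {b\<in>V. E w b \<and> E z b \<and> b \<noteq> x}"
definition exc :: "'a \<Rightarrow> nat" where "exc w = min (cy w) (cz w)"

text \<open>Data of the discharging argument: deficient and rich vertices of ny \<union> nz, the deficient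
  vertices adjacent to a rich one and the remaining (lone) ones; the donors of a lone vertex
  are its far neighbours of positive excess, each paying it share v, and load r is the total
  amount paid by r.\<close>
definition deficient :: "'a set" where "deficient = {w\<in>ny \<union> nz. exc w = 0}"
definition rich :: "'a set" where "rich = {w\<in>ny \<union> nz. exc w = 2}"
definition deficient_by_rich :: "'a set" where
  "deficient_by_rich = {v\<in>deficient. \<exists>u\<in>rich. E v u}"
definition deficient_lone :: "'a set" where "deficient_lone = deficient - deficient_by_rich"
definition donors :: "'a \<Rightarrow> 'a set" where "donors v = {r\<in>far. E v r \<and> 1 \<le> exc r}"
definition share :: "'a \<Rightarrow> nat" where "share v = (if 2 \<le> card (donors v) then 2 else 4)"
definition load :: "'a \<Rightarrow> nat" where "load r = sum share {v\<in>deficient_lone. r \<in> donors v}"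

end

context saturated_triangle
begin

lemma swap_outer: "swap.outer = outer" unfolding outer_def swap.outer_def by auto
lemma swap_ny: "swap.ny = nz" unfolding nz_def swap.ny_def swap_outer ..
lemma swap_nz: "swap.nz = ny" unfolding ny_def swap.nz_def swap_outer ..
lemma swap_far: "swap.far = far" unfolding far_def swap.far_def swap_outer swap_ny swap_nz by auto
lemma swap_cy: "swap.cy = cz" unfolding cz_def[abs_def] swap.cy_def[abs_def] ..
lemma swap_cz: "swap.cz = cy" unfolding cy_def[abs_def] swap.cz_def[abs_def] ..
lemma swap_exc: "swap.exc = exc"
  unfolding exc_def[abs_def] swap.exc_def[abs_def] swap_cy swap_cz by (auto simp: min.commute)
lemma swap_deficient: "swap.deficient = deficient"
  unfolding deficient_def swap.deficient_def swap_exc swap_ny swap_nz by auto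
lemma swap_rich: "swap.rich = rich"
  unfolding rich_def swap.rich_def swap_exc swap_ny swap_nz by auto
lemma swap_deficient_by_rich: "swap.deficient_by_rich = deficient_by_rich"
  unfolding deficient_by_rich_def swap.deficient_by_rich_def swap_deficient swap_rich ..
lemma swap_deficient_lone: "swap.deficient_lone = deficient_lone"
  unfolding deficient_lone_def swap.deficient_lone_def swap_deficient swap_deficient_by_rich ..
lemma swap_donors: "swap.donors = donors"
  unfolding donors_def[abs_def] swap.donors_def[abs_def] swap_exc swap_far ..
lemma swap_share: "swap.share = share"
  unfolding share_def[abs_def] swap.share_def[abs_def] swap_donors ..
lemma swap_load: "swap.load = load"
  unfolding load_def[abs_def] swap.load_def[abs_def] swap_share swap_deficient_lone swap_donors ..

lemmas swap_simps = swap_outer swap_ny swap_nz swap_far swap_cy swap_cz swap_exc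
  swap_deficient swap_rich swap_deficient_by_rich swap_deficient_lone swap_donors swap_share swap_load

lemma xyz_distinct: "x \<noteq> y" "x \<noteq> z" "y \<noteq> z"
  using irrefl triangle by metis+

lemma xyz_in_V: "x \<in> V" "y \<in> V" "z \<in> V"
  using edge_in_V triangle by blast+

lemma outer_iff: "w \<in> outer \<longleftrightarrow> w \<in> V \<and> w \<noteq> x \<and> w \<noteq> y \<and> w \<noteq> z"
  unfolding outer_def by auto

lemma parts_subset: "ny \<subseteq> outer" "nz \<subseteq> outer" "far \<subseteq> outer" "outer \<subseteq> V"
  unfolding ny_def nz_def far_def outer_def by auto

lemma finite_parts: "finite outer" "finite ny" "finite nz" "finite far"
  using parts_subset fin by (meson finite_subset)+

lemma ny_nz_disjoint: "ny \<inter> nz = {}"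
  unfolding ny_def nz_def using common_yz outer_iff by blast

lemma outer_split: "outer = (ny \<union> nz) \<union> far" "(ny \<union> nz) \<inter> far = {}"
  unfolding far_def using parts_subset by auto

lemma outer_not_adj_x: "w \<in> outer \<Longrightarrow> \<not> E w x"
  using nbrs_x sym outer_iff by blast

lemma adj_y_iff: "w \<in> outer \<Longrightarrow> E w y \<longleftrightarrow> w \<in> ny"
  unfolding ny_def using sym by blast

lemma deg_in_ny_nz: "deg_in (ny \<union> nz) w = deg_in ny w + deg_in nz w"
proof -
  have "{b\<in>ny \<union> nz. E w b} = {b\<in>ny. E w b} \<union> {b\<in>nz. E w b}" by auto
  then show ?thesis unfolding deg_in_def using finite_parts ny_nz_disjoint
    by (simp add: card_Un_disjoint disjoint_iff)
qed


lemma deg_in_le_1_unique: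
  assumes "deg_in S w \<le> 1" "S \<subseteq> outer" "b \<in> S" "c \<in> S" "E w b" "E w c"
  shows "b = c"
proof -
  have "finite {a\<in>S. E w a}" using assms(2) finite_parts(1) by (auto intro: rev_finite_subset)
  then show ?thesis
    using assms card_le_Suc0_iff_eq[of "{a\<in>S. E w a}"] unfolding deg_in_def by auto
qed

lemma cy_le_2:
  assumes "w \<in> outer" shows "cy w \<le> 2"
proof -
  have "cy w \<le> card {c\<in>V. E w c \<and> E y c}"
    unfolding cy_def using fin by (auto intro: card_mono)
  also have "\<dots> \<le> 2"
    using K23_free_common_neighbours[OF K23_free _ xyz_in_V(2) _ irrefl] assms outer_iff by blast
  finally show ?thesis .
qed

lemma cy_ge_1:
  assumes "E w b" "E y b" "b \<noteq> x" shows "1 \<le> cy w"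
proof -
  have "b \<in> {b\<in>V. E w b \<and> E y b \<and> b \<noteq> x}" using assms edge_in_V by blast
  then show ?thesis unfolding cy_def using fin by (auto simp: Suc_le_eq card_gt_0_iff)
qed

lemma cy_ge_2:
  assumes "E w b" "E y b" "E w c" "E y c" "b \<noteq> c" "b \<noteq> x" "c \<noteq> x" shows "2 \<le> cy w"
proof -
  have "{b, c} \<subseteq> {b\<in>V. E w b \<and> E y b \<and> b \<noteq> x}" using assms edge_in_V by blast
  then have "card {b, c} \<le> cy w" unfolding cy_def using fin by (auto intro: card_mono)
  then show ?thesis using assms(5) by simp
qed

lemma cy_split:
  assumes w: "w \<in> outer" shows "cy w = deg_in ny w + (if E w z then 1 else 0)"
proof -
  have "{b\<in>V. E w b \<and> E y b \<and> b \<noteq> x} = {b\<in>ny. E w b} \<union> (if E w z then {z} else {})"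
    using w triangle(3) xyz_in_V xyz_distinct irrefl sym outer_not_adj_x
    unfolding ny_def outer_iff by auto
  moreover have "z \<notin> {b\<in>ny. E w b}" using parts_subset outer_iff by blast
  moreover have "finite {b\<in>ny. E w b}" using finite_parts by simp
  ultimately show ?thesis unfolding cy_def deg_in_def by (simp add: card_insert_if)
qed

end

context saturated_triangle
begin

lemmas adj_z_iff = swap.adj_y_iff[unfolded swap_simps]
lemmas cz_le_2 = swap.cy_le_2[unfolded swap_simps]
lemmas cz_ge_1 = swap.cy_ge_1[unfolded swap_simps]
lemmas cz_ge_2 = swap.cy_ge_2[unfolded swap_simps]
lemmas cz_split = swap.cy_split[unfolded swap_simps]

text \<open>Saturation at the non-edge xw: the new edge xw must lie in a K23, which forces w to have
  two common neighbours (other than x) with y or with z.\<close>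
lemma cy_or_cz_2:
  assumes w: "w \<in> outer" shows "2 \<le> cy w \<or> 2 \<le> cz w"
proof -
  have "w \<in> V" "x \<noteq> w" "\<not> E x w" using w outer_iff outer_not_adj_x sym by auto
  then have "closes_K23 E x w \<or> closes_K23 E w x"
    using saturation_closes_K23[OF saturated[OF xyz_in_V(1)] K23_free] by blast
  then show ?thesis
  proof
    assume "closes_K23 E x w"
    then obtain a b c where "distinct [x, w, a, b, c]" "E x b" "E a b" "E x c" "E a c"
      unfolding closes_K23_def by blast
    moreover have "b = y \<and> c = z \<or> b = z \<and> c = y" using calculation nbrs_x by auto
    ultimately show ?thesis using common_yz sym by auto
  next
    assume "closes_K23 E w x"
    then obtain a b c where d: "distinct [w, x, a, b, c]"
      and e: "E a x" "E w b" "E a b" "E w c" "E a c"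
      unfolding closes_K23_def by blast
    have "a = y \<or> a = z" using e(1) nbrs_x sym by blast
    then show ?thesis using cy_ge_2[of w b c] cz_ge_2[of w b c] d e by auto
  qed
qed

lemma cy_plus_cz: "w \<in> outer \<Longrightarrow> cy w + cz w = exc w + 2"
proof -
  assume w: "w \<in> outer"
  show ?thesis using cy_or_cz_2[OF w] cy_le_2[OF w] cz_le_2[OF w] unfolding exc_def by linarith
qed

lemma exc_le_2: "w \<in> outer \<Longrightarrow> exc w \<le> 2"
  using cy_le_2 unfolding exc_def by (meson min.coboundedI1)

lemma exc_ge_1:
  assumes "E w b" "E y b" "b \<noteq> x" "E w c" "E z c" "c \<noteq> x" shows "1 \<le> exc w"
  using cy_ge_1[OF assms(1-3)] cz_ge_1[OF assms(4-6)] unfolding exc_def by simp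

lemma near_degrees:
  assumes w: "w \<in> ny \<union> nz" shows "deg_in ny w + deg_in nz w + 1 = exc w + 2"
proof -
  have "w \<in> outer" using w parts_subset by auto
  moreover have "E w z \<noteq> E w y"
    using w ny_nz_disjoint adj_z_iff[OF calculation] adj_y_iff[OF calculation] by auto
  ultimately show ?thesis using cy_split[of w] cz_split[of w] cy_plus_cz[of w] by auto
qed

lemma far_cy_cz:
  assumes r: "r \<in> far" shows "cy r = deg_in ny r" "cz r = deg_in nz r"
proof -
  have "r \<in> outer" "\<not> E r y" "\<not> E r z"
    using r adj_y_iff adj_z_iff parts_subset unfolding far_def by auto
  then show "cy r = deg_in ny r" "cz r = deg_in nz r" using cy_split cz_split by auto
qed

lemma far_degrees: "r \<in> far \<Longrightarrow> deg_in ny r + deg_in nz r = exc r + 2"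
  using far_cy_cz cy_plus_cz parts_subset by (metis subsetD)

lemma deficient_ny_degrees:
  assumes v: "v \<in> deficient" "v \<in> ny" shows "deg_in ny v = 0" "deg_in nz v = 1"
proof -
  have o: "v \<in> outer" using v parts_subset by auto
  have "E v y" "\<not> E v z" using v ny_nz_disjoint adj_y_iff[OF o] adj_z_iff[OF o] by auto
  then have "cy v = deg_in ny v" "cz v = deg_in nz v + 1" using cy_split[OF o] cz_split[OF o] by auto
  moreover have "exc v = 0" using v unfolding deficient_def by auto
  ultimately show "deg_in ny v = 0" "deg_in nz v = 1"
    using cy_plus_cz[OF o] unfolding exc_def by linarith+
qed

lemma deficient_no_ny_nbr:
  assumes "v \<in> deficient" "v \<in> ny" "b \<in> ny" shows "\<not> E v b"
proof
  assume "E v b"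
  then have "{a\<in>ny. E v a} \<noteq> {}" using assms(3) by blast
  then show False
    using deficient_ny_degrees(1)[OF assms(1,2)] finite_parts(2) unfolding deg_in_def by auto
qed

lemma deficient_unique_nz_nbr:
  "v \<in> deficient \<Longrightarrow> v \<in> ny \<Longrightarrow> b \<in> nz \<Longrightarrow> c \<in> nz \<Longrightarrow> E v b \<Longrightarrow> E v c \<Longrightarrow> b = c"
  using deg_in_le_1_unique[of nz v b c] deficient_ny_degrees(2) parts_subset(2) by simp

text \<open>Saturation at the non-edge vz of a deficient vertex v of ny, first possibility: v and
  a vertex a of nz have two common neighbours, each lying in nz or being a donor of v.\<close>
lemma forward_partner:
  assumes v: "v \<in> deficient" "v \<in> ny" and closes: "closes_K23 E v z"
  shows "\<exists>a\<in>nz. \<exists>b c. b \<noteq> c \<and> E v b \<and> E a b \<and> E v c \<and> E a c \<and>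
           (b \<in> nz \<or> b \<in> donors v) \<and> (c \<in> nz \<or> c \<in> donors v)"
proof -
  obtain a b c where d: "distinct [v, z, a, b, c]"
    and e: "E a z" "E v b" "E a b" "E v c" "E a c"
    using closes unfolding closes_K23_def by blast
  have vo: "v \<in> outer" and vx: "\<not> E v x" using v parts_subset outer_not_adj_x by auto
  have no_ny: "\<not> E v t" if "t \<in> ny" for t using deficient_no_ny_nbr v that .
  have "a \<noteq> x"
  proof
    assume "a = x"
    then have "b = y" "c = y" using nbrs_x d e by auto
    then show False using d by simp
  qed
  moreover have "a \<noteq> y"
  proof
    assume "a = y"
    then have "b \<in> ny" using e d edge_in_V vx irrefl unfolding ny_def outer_iff by auto
    then show False using no_ny e(2) by blast
  qed
  ultimately have ao: "a \<in> outer" and anz: "a \<in> nz"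
    using e(1) edge_in_V d adj_z_iff outer_iff by auto
  have sorted: "t \<in> nz \<or> t \<in> donors v" if t: "E v t" "E a t" "t \<noteq> z" for t
  proof -
    have "t \<noteq> y" using t(2) ao anz ny_nz_disjoint adj_y_iff by blast
    then have "t \<in> outer" using t edge_in_V vx outer_iff by blast
    moreover have "t \<notin> ny" using no_ny t(1) by blast
    moreover have "1 \<le> exc t"
      using exc_ge_1[of t v a] t sym e(1) \<open>a \<noteq> x\<close> v(2) vo unfolding ny_def outer_iff by blast
    ultimately show ?thesis using outer_split t(1) unfolding donors_def by blast
  qed
  show ?thesis using anz sorted d e by (intro bexI[of _ a] exI[of _ b] exI[of _ c]) auto
qed

text \<open>Second possibility: y's role is taken over by z, i.e. z and a vertex a adjacent to v have
  two common neighbours; then a is a donor of v with cz a = 2 (unless v is next to a rich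
  vertex).\<close>
lemma backward_partner:
  assumes v: "v \<in> deficient_lone" "v \<in> ny" and closes: "closes_K23 E z v"
  shows "\<exists>a\<in>donors v. 2 \<le> cz a"
proof -
  obtain a b c where d: "distinct [z, v, a, b, c]"
    and e: "E a v" "E z b" "E a b" "E z c" "E a c"
    using closes unfolding closes_K23_def by blast
  have vd: "v \<in> deficient" and vr: "v \<notin> deficient_by_rich"
    using v unfolding deficient_lone_def by auto
  have vo: "v \<in> outer" and yv: "E y v" using v parts_subset unfolding ny_def by auto
  have "a \<noteq> x" using e(1) outer_not_adj_x[OF vo] sym by blast
  moreover have "a \<noteq> y"
  proof
    assume "a = y"
    then have "b = x" "c = x" using e common_yz by auto
    then show False using d by simp
  qed
  ultimately have ao: "a \<in> outer" using e(1) edge_in_V d outer_iff by auto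
  have "a \<notin> ny" using deficient_no_ny_nbr[OF vd v(2)] e(1) sym by blast
  have "b \<noteq> x" "c \<noteq> x" using e outer_not_adj_x[OF ao] by auto
  then have cz2: "2 \<le> cz a" using cz_ge_2[of a b c] e d sym by auto
  have "1 \<le> cy a" using cy_ge_1[of a v] e(1) yv sym vo outer_iff by blast
  have "a \<notin> nz"
  proof
    assume "a \<in> nz"
    then have "E a z" using adj_z_iff[OF ao] by blast
    then have "2 \<le> cy a"
      using cy_ge_2[of a v z] e(1) yv triangle(3) sym d vo xyz_distinct outer_iff by auto
    then have "exc a = 2" using cz2 exc_le_2[OF ao] unfolding exc_def by simp
    then have "v \<in> deficient_by_rich"
      using vd \<open>a \<in> nz\<close> e(1) sym unfolding deficient_by_rich_def rich_def by blast
    then show False using vr by blast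
  qed
  then have "a \<in> far" using ao \<open>a \<notin> ny\<close> outer_split by blast
  moreover have "1 \<le> exc a" using cz2 \<open>1 \<le> cy a\<close> unfolding exc_def by simp
  ultimately show ?thesis using cz2 e(1) sym unfolding donors_def by blast
qed

end

context saturated_triangle
begin

lemmas deficient_no_nz_nbr = swap.deficient_no_ny_nbr[unfolded swap_simps]

lemma donors_nonempty_ny:
  assumes v: "v \<in> deficient_lone" "v \<in> ny" shows "donors v \<noteq> {}"
proof -
  have vd: "v \<in> deficient" using v unfolding deficient_lone_def by blast
  have vo: "v \<in> outer" using v parts_subset by auto
  then have "\<not> E v z" using v ny_nz_disjoint adj_z_iff by blast
  then have "closes_K23 E v z \<or> closes_K23 E z v"
    using saturation_closes_K23[OF saturated[OF _ xyz_in_V(3)] K23_free] vo outer_iff by blast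
  then show ?thesis
  proof
    assume "closes_K23 E v z"
    then obtain b c where "b \<noteq> c" "E v b" "E v c" "b \<in> nz \<or> b \<in> donors v" "c \<in> nz \<or> c \<in> donors v"
      using forward_partner[OF vd v(2)] by blast
    then show ?thesis using deficient_unique_nz_nbr[OF vd v(2)] by blast
  next
    assume "closes_K23 E z v"
    then show ?thesis using backward_partner[OF v] by blast
  qed
qed

lemma two_donors:
  assumes u: "u \<in> deficient_lone" "u \<in> ny"
    and r: "r \<in> donors u" "deg_in nz r = 1"
    and v0: "v0 \<in> deficient" "v0 \<in> nz" "E r v0"
  shows "2 \<le> card (donors u)"
proof (rule ccontr)
  assume "\<not> ?thesis"
  then have "card (donors u) \<le> 1" by simp
  moreover have "finite (donors u)" using finite_parts(4) unfolding donors_def by simp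
  ultimately have sole: "t = r" if "t \<in> donors u" for t
    using r(1) that card_le_Suc0_iff_eq by auto
  have ud: "u \<in> deficient" using u unfolding deficient_lone_def by blast
  have uo: "u \<in> outer" using u parts_subset by auto
  have rfar: "r \<in> far" using r(1) unfolding donors_def by blast
  then have "\<not> E u z" using u ny_nz_disjoint adj_z_iff[OF uo] by blast
  then have "closes_K23 E u z \<or> closes_K23 E z u"
    using saturation_closes_K23[OF saturated[OF _ xyz_in_V(3)] K23_free] uo outer_iff by blast
  then show False
  proof
    assume "closes_K23 E u z"
    then obtain a b c where a: "a \<in> nz" and bc: "b \<noteq> c" "E a b" "E a c" "E u b" "E u c"
      "b \<in> nz \<or> b = r" "c \<in> nz \<or> c = r"
      using forward_partner[OF ud u(2)] sole by blast
    then obtain t where "E a r" "t \<in> nz" "E a t"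
      using deficient_unique_nz_nbr[OF ud u(2)] by blast
    moreover have "a = v0"
      using deg_in_le_1_unique[of nz r a v0] r(2) v0 a \<open>E a r\<close> sym parts_subset by auto
    ultimately show False using deficient_no_nz_nbr[OF v0(1,2)] by blast
  next
    assume "closes_K23 E z u"
    then obtain a where "a \<in> donors u" "2 \<le> cz a" using backward_partner[OF u] by blast
    then show False using sole far_cy_cz(2)[OF rfar] r(2) by auto
  qed
qed

lemma unique_deficient_nbr_nz:
  assumes u: "u \<in> nz" and v: "v1 \<in> deficient" "v2 \<in> deficient" "E v1 u" "E v2 u"
  shows "v1 = v2"
proof -
  have uo: "u \<in> outer" using u parts_subset by auto
  have in_ny: "v \<in> ny" if "v \<in> deficient" "E v u" for v
    using that u deficient_no_nz_nbr unfolding deficient_def by blast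
  have "E u z" using adj_z_iff[OF uo] u by blast
  then have "deg_in ny u \<le> 1" using cy_split[OF uo] cy_le_2[OF uo] by simp
  then show ?thesis
    using deg_in_le_1_unique[of ny u v1 v2] in_ny v sym parts_subset(1) by blast
qed

lemma sum_share_le: "sum share T \<le> 4 * card T"
proof -
  have "share v \<le> 4" for v unfolding share_def by simp
  then show ?thesis using sum_bounded_above[of T share 4] by (simp add: mult.commute)
qed

lemma recipients_adjacent: "{v\<in>deficient_lone. r \<in> donors v} \<subseteq> {b\<in>ny \<union> nz. E r b}"
proof
  fix v assume "v \<in> {v\<in>deficient_lone. r \<in> donors v}"
  then have "v \<in> ny \<union> nz" "E v r" unfolding deficient_lone_def deficient_def donors_def by auto
  then show "v \<in> {b\<in>ny \<union> nz. E r b}" using sym by blast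
qed

lemma finite_recipients: "finite {v\<in>deficient_lone. r \<in> donors v}"
  by (rule finite_subset[OF recipients_adjacent]) (use finite_parts in auto)

lemma load_unbalanced:
  assumes r: "r \<in> far" "deg_in nz r = 1" shows "load r \<le> 8"
proof -
  define S where "S = {v\<in>deficient_lone. r \<in> donors v}"
  have "finite S" unfolding S_def by (rule finite_recipients)
  have "S = (S \<inter> ny) \<union> (S \<inter> nz)" "(S \<inter> ny) \<inter> (S \<inter> nz) = {}"
    using recipients_adjacent ny_nz_disjoint unfolding S_def by auto
  then have split: "load r = sum share (S \<inter> ny) + sum share (S \<inter> nz)"
    unfolding load_def S_def[symmetric] using \<open>finite S\<close> by (metis finite_Int sum.union_disjoint)
  have "card (S \<inter> ny) \<le> deg_in ny r" "card (S \<inter> nz) \<le> deg_in nz r"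
    unfolding deg_in_def using recipients_adjacent finite_parts
    by (auto simp: S_def intro!: card_mono)
  moreover have "deg_in ny r \<le> 2"
    using far_cy_cz(1)[OF r(1)] cy_le_2 r(1) parts_subset by (metis subsetD)
  ultimately have cards: "card (S \<inter> ny) \<le> 2" "card (S \<inter> nz) \<le> 1" using r(2) by auto
  have "sum share (S \<inter> nz) \<le> 4" using sum_share_le[of "S \<inter> nz"] cards(2) by linarith
  show ?thesis
  proof (cases "S \<inter> nz = {}")
    case True
    then show ?thesis using split sum_share_le[of "S \<inter> ny"] cards(1) by simp
  next
    case False
    then obtain v0 where v0: "v0 \<in> S" "v0 \<in> nz" by blast
    have "v0 \<in> deficient" "E r v0" using v0 sym unfolding S_def deficient_lone_def donors_def by auto
    then have "share u = 2" if "u \<in> S \<inter> ny" for u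
      using two_donors[of u r v0] that v0(2) r(2) unfolding S_def share_def by auto
    then have "sum share (S \<inter> ny) \<le> card (S \<inter> ny) * 2"
      using sum_bounded_above[of "S \<inter> ny" share 2] by simp
    then show ?thesis using split cards(1) \<open>sum share (S \<inter> nz) \<le> 4\<close> by simp
  qed
qed

end

context saturated_triangle
begin

lemmas unique_deficient_nbr_ny = swap.unique_deficient_nbr_nz[unfolded swap_simps]

lemma donors_nonempty: "v \<in> deficient_lone \<Longrightarrow> donors v \<noteq> {}"
  using donors_nonempty_ny swap.donors_nonempty_ny[unfolded swap_simps]
  unfolding deficient_lone_def deficient_def by blast

text \<open>Total charge received by a far vertex r: nothing if exc r = 0, at most 4 from each of its
  at most 4 neighbours in ny and nz if exc r = 2, and at most 8 if exc r = 1.\<close>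
lemma load_bound:
  assumes r: "r \<in> far" shows "load r \<le> 8 * exc r"
proof -
  have ro: "r \<in> outer" using r parts_subset by auto
  have degs: "deg_in ny r + deg_in nz r = exc r + 2" "deg_in ny r \<le> 2" "deg_in nz r \<le> 2"
    using far_degrees[OF r] far_cy_cz[OF r] cy_le_2[OF ro] cz_le_2[OF ro] by auto
  consider "exc r = 0" | "exc r = 1" | "exc r = 2" using exc_le_2[OF ro] by linarith
  then show ?thesis
  proof cases
    case 1
    then have "{v\<in>deficient_lone. r \<in> donors v} = {}" unfolding donors_def by auto
    then have "load r = 0" unfolding load_def by (simp only: sum.empty)
    then show ?thesis by simp
  next
    case 2
    then have "deg_in nz r = 1 \<or> deg_in ny r = 1" using degs by linarith
    then show ?thesis
      using load_unbalanced[OF r] swap.load_unbalanced[unfolded swap_simps, OF r] 2 by auto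
  next
    case 3
    have "card {v\<in>deficient_lone. r \<in> donors v} \<le> deg_in (ny \<union> nz) r"
      unfolding deg_in_def using recipients_adjacent finite_parts by (intro card_mono) auto
    then have "card {v\<in>deficient_lone. r \<in> donors v} \<le> 4" using 3 degs(1) deg_in_ny_nz by simp
    then show ?thesis using sum_share_le[of "{v\<in>deficient_lone. r \<in> donors v}"] 3
      unfolding load_def by simp
  qed
qed

lemma finite_deficient: "finite deficient" "finite deficient_lone" "finite deficient_by_rich" "finite rich"
  using finite_parts unfolding deficient_def deficient_lone_def deficient_by_rich_def rich_def by auto

text \<open>Double counting of the charge: each lone deficient vertex receives at least 4 in total
  from its donors, and a far vertex r gives away at most 8 exc r.\<close>
lemma lone_count: "card deficient_lone \<le> 2 * (\<Sum>r\<in>far. exc r)"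
proof -
  have received: "4 \<le> card (donors v) * share v" if "v \<in> deficient_lone" for v
  proof -
    have "finite (donors v)" using finite_parts(4) unfolding donors_def by simp
    then have "1 \<le> card (donors v)" using donors_nonempty[OF that] by (simp add: Suc_le_eq card_gt_0_iff)
    then show ?thesis unfolding share_def by simp
  qed
  have donors_far: "{r\<in>far. r \<in> donors v} = donors v" for v unfolding donors_def by auto
  have "4 * card deficient_lone = (\<Sum>v\<in>deficient_lone. 4)" by simp
  also have "\<dots> \<le> (\<Sum>v\<in>deficient_lone. card (donors v) * share v)"
    using received by (rule sum_mono)
  also have "\<dots> = (\<Sum>v\<in>deficient_lone. \<Sum>r\<in>{r\<in>far. r \<in> donors v}. share v)"
    unfolding donors_far by simp
  also have "\<dots> = (\<Sum>r\<in>far. load r)"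
    unfolding load_def using finite_deficient(2) finite_parts(4) by (rule sum.swap_restrict)
  also have "\<dots> \<le> (\<Sum>r\<in>far. 8 * exc r)" using load_bound by (rule sum_mono)
  also have "\<dots> = 8 * (\<Sum>r\<in>far. exc r)" by (simp add: sum_distrib_left)
  finally show ?thesis by linarith
qed

text \<open>Mapping each deficient vertex to an adjacent rich vertex is injective, since a vertex of
  ny or nz has at most one deficient neighbour.\<close>
lemma by_rich_count: "card deficient_by_rich \<le> card rich"
proof -
  define f where "f v = (SOME u. u \<in> rich \<and> E v u)" for v
  have f: "f v \<in> rich \<and> E v (f v)" if "v \<in> deficient_by_rich" for v
  proof -
    have "\<exists>u. u \<in> rich \<and> E v u" using that unfolding deficient_by_rich_def by blast
    then show ?thesis unfolding f_def by (rule someI_ex)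
  qed
  have "inj_on f deficient_by_rich"
  proof (rule inj_onI)
    fix v1 v2 assume v: "v1 \<in> deficient_by_rich" "v2 \<in> deficient_by_rich" "f v1 = f v2"
    then have "v1 \<in> deficient" "v2 \<in> deficient" unfolding deficient_by_rich_def by auto
    moreover have "f v1 \<in> ny \<union> nz" "E v1 (f v1)" "E v2 (f v1)"
      using f[OF v(1)] f[OF v(2)] v(3) unfolding rich_def by auto
    ultimately show "v1 = v2"
      using unique_deficient_nbr_nz[of "f v1" v1 v2] unique_deficient_nbr_ny[of "f v1" v1 v2] by blast
  qed
  moreover have "f ` deficient_by_rich \<subseteq> rich" using f by blast
  ultimately show ?thesis using finite_deficient(4) by (simp add: card_inj_on_le)
qed

lemma discharging: "card (ny \<union> nz) \<le> (\<Sum>w\<in>ny \<union> nz. exc w) + 2 * (\<Sum>r\<in>far. exc r)"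
proof -
  let ?Q = "ny \<union> nz"
  have fin: "finite ?Q" using finite_parts by simp
  have "deficient = deficient_by_rich \<union> deficient_lone" "deficient_by_rich \<inter> deficient_lone = {}"
    unfolding deficient_lone_def deficient_by_rich_def by auto
  then have "card deficient = card deficient_by_rich + card deficient_lone"
    using finite_deficient by (simp add: card_Un_disjoint)
  then have deficient_bound: "card deficient \<le> card rich + 2 * (\<Sum>r\<in>far. exc r)"
    using by_rich_count lone_count by linarith
  have count_rich: "card rich = (\<Sum>w\<in>?Q. if exc w = 2 then 1 else 0)"
    unfolding card_eq_sum rich_def by (rule sum.inter_filter[OF fin])
  have count_deficient: "card deficient = (\<Sum>w\<in>?Q. if exc w = 0 then 1 else 0)"
    unfolding card_eq_sum deficient_def by (rule sum.inter_filter[OF fin])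
  have pointwise: "1 + (if exc w = 2 then 1 else 0) \<le> exc w + (if exc w = 0 then 1 else 0)"
    if "w \<in> ?Q" for w
    using exc_le_2[of w] that parts_subset by auto
  have "card ?Q + card rich = (\<Sum>w\<in>?Q. 1) + (\<Sum>w\<in>?Q. if exc w = 2 then 1 else 0)"
    unfolding count_rich by simp
  also have "\<dots> = (\<Sum>w\<in>?Q. 1 + (if exc w = 2 then 1 else 0))"
    by (rule sum.distrib[symmetric])
  also have "\<dots> \<le> (\<Sum>w\<in>?Q. exc w + (if exc w = 0 then 1 else 0))"
    using pointwise by (rule sum_mono)
  also have "\<dots> = (\<Sum>w\<in>?Q. exc w) + card deficient"
    unfolding count_deficient by (rule sum.distrib)
  finally show ?thesis using deficient_bound by linarith
qed

lemma deg_in_outer_split: "deg_in outer w = deg_in (ny \<union> nz) w + deg_in far w"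
proof -
  have "{b\<in>outer. E w b} = {b\<in>ny \<union> nz. E w b} \<union> {b\<in>far. E w b}"
    "{b\<in>ny \<union> nz. E w b} \<inter> {b\<in>far. E w b} = {}"
    using outer_split by auto
  then show ?thesis unfolding deg_in_def using finite_parts by (simp add: card_Un_disjoint)
qed

lemma sum_deg_in_swap:
  assumes "finite A" "finite B" shows "(\<Sum>a\<in>A. deg_in B a) = (\<Sum>b\<in>B. deg_in A b)"
proof -
  have "(\<Sum>a\<in>A. deg_in B a) = (\<Sum>a\<in>A. card {b\<in>B. E a b})" unfolding deg_in_def ..
  also have "\<dots> = (\<Sum>a\<in>A. \<Sum>b\<in>{b\<in>B. E a b}. 1)" by simp
  also have "\<dots> = (\<Sum>b\<in>B. \<Sum>a\<in>{a\<in>A. E a b}. 1)" using assms by (rule sum.swap_restrict)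
  also have "\<dots> = (\<Sum>b\<in>B. card {a\<in>A. E b a})"
  proof -
    have "{a\<in>A. E a b} = {a\<in>A. E b a}" for b using sym by blast
    then show ?thesis by simp
  qed
  also have "\<dots> = (\<Sum>b\<in>B. deg_in A b)" unfolding deg_in_def ..
  finally show ?thesis .
qed

text \<open>The edges inside the outer vertices: summing degrees and using the degree identities of
  ny, nz and far vertices together with the discharging inequality.\<close>
lemma outer_edges: "2 * card outer \<le> card ny + card nz + card (edges outer E)"
proof -
  let ?Q = "ny \<union> nz"
  have finQ: "finite ?Q" using finite_parts by simp
  have card_split: "card outer = card ?Q + card far" "card ?Q = card ny + card nz"
    using outer_split finite_parts ny_nz_disjoint by (simp_all add: card_Un_disjoint)
  have handshake_outer: "2 * card (edges outer E) = (\<Sum>w\<in>outer. deg_in outer w)"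
    unfolding deg_in_def using finite_parts(1) sym irrefl by (rule handshake)
  have "(\<Sum>w\<in>outer. deg_in outer w) = (\<Sum>w\<in>outer. deg_in ?Q w) + (\<Sum>w\<in>outer. deg_in far w)"
    unfolding deg_in_outer_split by (rule sum.distrib)
  moreover have "(\<Sum>w\<in>outer. deg_in far w) = (\<Sum>r\<in>far. deg_in outer r)"
    using finite_parts(1,4) by (rule sum_deg_in_swap)
  moreover have "(\<Sum>r\<in>far. deg_in ?Q r) \<le> (\<Sum>r\<in>far. deg_in outer r)"
    unfolding deg_in_outer_split by (rule sum_mono) simp
  moreover have "(\<Sum>w\<in>outer. deg_in ?Q w) = (\<Sum>w\<in>?Q. deg_in ?Q w) + (\<Sum>r\<in>far. deg_in ?Q r)"
    unfolding outer_split(1) using finQ finite_parts(4) outer_split(2) by (rule sum.union_disjoint)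
  moreover have "(\<Sum>w\<in>?Q. deg_in ?Q w) = (\<Sum>w\<in>?Q. exc w) + card ?Q"
  proof -
    have "(\<Sum>w\<in>?Q. deg_in ?Q w) = (\<Sum>w\<in>?Q. exc w + 1)"
      using near_degrees by (intro sum.cong) (simp_all add: deg_in_ny_nz)
    then show ?thesis by (simp add: sum_Suc)
  qed
  moreover have "(\<Sum>r\<in>far. deg_in ?Q r) = (\<Sum>r\<in>far. exc r) + 2 * card far"
  proof -
    have "(\<Sum>r\<in>far. deg_in ?Q r) = (\<Sum>r\<in>far. exc r + 2)"
      using far_degrees by (intro sum.cong) (simp_all add: deg_in_ny_nz)
    then show ?thesis by (simp add: sum_Suc)
  qed
  ultimately show ?thesis using handshake_outer discharging card_split by linarith
qed

text \<open>Four disjoint families of edges of G: the triangle xyz, the edges from y to ny, those from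
  z to nz, and the edges inside the outer vertices.\<close>
lemma edges_lower_bound: "3 + card ny + card nz + card (edges outer E) \<le> card (edges V E)"
proof -
  define T where "T = {{x, y}, {x, z}, {y, z}}"
  define Py where "Py = (\<lambda>w. {y, w}) ` ny"
  define Pz where "Pz = (\<lambda>w. {z, w}) ` nz"
  have in_edges: "{u, v} \<in> edges V E" if "E u v" for u v
    using that edge_in_V unfolding edges_def by blast
  have sub: "T \<union> (Py \<union> Pz) \<union> edges outer E \<subseteq> edges V E"
  proof -
    have "T \<subseteq> edges V E" unfolding T_def using in_edges triangle by blast
    moreover have "Py \<subseteq> edges V E" "Pz \<subseteq> edges V E"
      unfolding Py_def Pz_def ny_def nz_def using in_edges by auto
    moreover have "edges outer E \<subseteq> edges V E" using parts_subset(4) unfolding edges_def by blast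
    ultimately show ?thesis by blast
  qed
  have outer_xyz: "outer \<inter> {x, y, z} = {}" unfolding outer_def by blast
  have "T \<inter> (Py \<union> Pz) = {}"
  proof -
    have "s \<subseteq> {x, y, z}" if "s \<in> T" for s using that unfolding T_def by blast
    moreover have "s \<inter> outer \<noteq> {}" if "s \<in> Py \<union> Pz" for s
      using that parts_subset unfolding Py_def Pz_def by blast
    ultimately show ?thesis using outer_xyz by blast
  qed
  moreover have "Py \<inter> Pz = {}"
    unfolding Py_def Pz_def using xyz_distinct parts_subset outer_xyz by (auto simp: doubleton_eq_iff)
  moreover have "(T \<union> (Py \<union> Pz)) \<inter> edges outer E = {}"
  proof -
    have "s \<inter> {x, y, z} \<noteq> {}" if "s \<in> T \<union> (Py \<union> Pz)" for s
      using that unfolding T_def Py_def Pz_def by blast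
    moreover have "s \<subseteq> outer" if "s \<in> edges outer E" for s using that unfolding edges_def by blast
    ultimately show ?thesis using outer_xyz by blast
  qed
  moreover have "card T = 3" unfolding T_def using xyz_distinct by (simp add: doubleton_eq_iff)
  moreover have "card Py = card ny" "card Pz = card nz"
    unfolding Py_def Pz_def by (auto intro!: card_image simp: inj_on_def doubleton_eq_iff)
  moreover have "finite T" "finite Py" "finite Pz" "finite (edges outer E)"
    using sub finite_edges[OF fin] finite_subset by blast+
  ultimately have "card (T \<union> (Py \<union> Pz) \<union> edges outer E) = 3 + card ny + card nz + card (edges outer E)"
    by (simp add: card_Un_disjoint)
  then show ?thesis using card_mono[OF finite_edges[OF fin] sub] by simp
qed

theorem edge_bound: "2 * card V \<le> num_edges V E + 3"
proof -
  have "card outer = card V - 3" "3 \<le> card V"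
    using xyz_in_V xyz_distinct card_mono[OF fin, of "{x, y, z}"] fin
    unfolding outer_def by (simp_all add: card_Diff_subset)
  then show ?thesis
    using outer_edges edges_lower_bound unfolding num_edges_eq_card_edges by linarith
qed

end

lemma saturated_triangle_at_AB_vertex:
  assumes sat: "K23_saturated V E" and x: "x \<in> V" "degree V E x = 2"
    and adjacent: "\<forall>y z. E x y \<and> E x z \<and> y \<noteq> z \<longrightarrow> E y z"
    and one_common: "\<forall>y z. E x y \<and> E x z \<and> y \<noteq> z \<longrightarrow> card {w\<in>V. E y w \<and> E z w} = 1"
  shows "\<exists>y z. saturated_triangle V E x y z"
proof -
  have G: "finite V" "\<And>u v. E u v \<Longrightarrow> u \<in> V \<and> v \<in> V" "\<And>u v. E u v \<Longrightarrow> E v u" "\<And>u. \<not> E u u"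
    using sat unfolding K23_saturated_def graph_def by blast+
  obtain y z where yz: "{v\<in>V. E x v} = {y, z}" "y \<noteq> z"
    using x(2) card_2_iff unfolding degree_def by metis
  then have xy: "E x y" "E x z" by blast+
  have nbrs_x: "w = y \<or> w = z" if "E x w" for w using that G(2) yz(1) by blast
  have yz_adj: "E y z" using adjacent xy yz(2) by blast
  have common_yz: "w = x" if "E y w" "E z w" for w
  proof -
    have "card {w\<in>V. E y w \<and> E z w} = 1" using one_common xy yz(2) by blast
    moreover have "x \<in> {w\<in>V. E y w \<and> E z w}" "w \<in> {w\<in>V. E y w \<and> E z w}"
      using x(1) xy that G(2,3) by auto
    ultimately show ?thesis using G(1) card_le_Suc0_iff_eq[of "{w\<in>V. E y w \<and> E z w}"] by auto
  qed
  have "saturated_triangle V E x y z"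
    using G xy yz_adj nbrs_x common_yz sat unfolding K23_saturated_def
    by unfold_locales blast+
  then show ?thesis by blast
qed

theorem lemma5p1:
  fixes V :: "'a set" and E :: "'a \<Rightarrow> 'a \<Rightarrow> bool" and n :: nat
  assumes "sat_graph_K23 n V E"
    and "min_degree V E = 2"
  defines "A \<equiv> {x \<in> V. degree V E x = 2 \<and> (\<forall>y z. E x y \<and> E x z \<and> y \<noteq> z \<longrightarrow> E y z)}"
    and "B \<equiv> {x \<in> V. degree V E x = 2 \<and> (\<forall>y z. E x y \<and> E x z \<and> y \<noteq> z \<longrightarrow>
                 card {w \<in> V. E y w \<and> E z w} = 1)}"
  assumes "A \<inter> B \<noteq> {}"
  shows "int (num_edges V E) \<ge> 2 * int n - 3"
proof -
  have n: "card V = n" and sat: "K23_saturated V E"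
    using assms(1) unfolding sat_graph_K23_def by auto
  obtain x where "x \<in> A" "x \<in> B" using assms(5) by blast
  then obtain y z where "saturated_triangle V E x y z"
    using saturated_triangle_at_AB_vertex[OF sat] unfolding A_def B_def by blast
  then have "2 * card V \<le> num_edges V E + 3" by (rule saturated_triangle.edge_bound)
  then show ?thesis using n by linarith
qed

end
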